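(* For any $x\in\mathbb{R}^n$, $\frac{\mu_1}{2}d(x,P)^2\le f(x)\le\frac{\mu_2}{2}d(x,P)^2$, where $0<\mu_1=\frac{1}{mL^2}\le\mu_2=\min\{1,\frac{\beta}{m}\lambda_{\max}(A^TA)\}\le1$.
   Context: Let $A\in\mathbb{R}^{m\times n}$ have rows $a_1^T,\dots,a_m^T$ with $\|a_i\|_2=1$, and $b\in\mathbb{R}^m$; assume $Ax\le b$ is consistent and let $P=\{x:Ax\le b\}$, $\mathcal{P}(x)$ the Euclidean projection onto $P$, $d(x,P)=\|x-\mathcal{P}(x)\|$, $t^+=\max\{t,0\}$ (entrywise on vectors). Fix an integer $1\le\beta\le m$. Sampling distribution $\mathbb{S}$ at $x$: $\tau\subseteq\{1,\dots,m\}$ with $|\tau|=\beta$ uniformly at random among all $\binom m\beta$ subsets, and $i^*\in\tau$ maximizing $(a_i^Tx-b_i)^+$ over $\tau$; $\mathbb{E}_{\mathbb{S}}$ is expectation over $\tau$. $f(x)=\mathbb{E}_{\mathbb{S}}[\frac12|(a_{i^*}^Tx-b_{i^*})^+|^2]$. $L>0$ is a Hoffman constant: $d(x,P)^2\le L^2\|(Ax-b)^+\|^2$ for all $x$. *)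

theory Defs
  imports "HOL-Analysis.Analysis"
begin

definition pos_part :: "real^'m \<Rightarrow> real^'m" where
  "pos_part v = (\<chi> i. max (v $ i) 0)"

definition polyhedron :: "real^'n^'m \<Rightarrow> real^'m \<Rightarrow> (real^'n) set" where
  "polyhedron A b = {x. \<forall>i. (A *v x) $ i \<le> b $ i}"

definition lambda_max :: "real^'n^'n \<Rightarrow> real" where
  "lambda_max M = Max {l. \<exists>v. v \<noteq> 0 \<and> M *v v = l *\<^sub>R v}"

definition sampled_f :: "real^'n^'m \<Rightarrow> real^'m \<Rightarrow> nat \<Rightarrow> real^'n \<Rightarrow> real" where
  "sampled_f A b \<beta> x =
     (\<Sum>\<tau>\<in>{\<tau>::'m set. card \<tau> = \<beta>}.
        (1/2) * (Max ((\<lambda>i. max ((A *v x) $ i - b $ i) 0) ` \<tau>))\<^sup>2)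
     / real (CARD('m) choose \<beta>)"

end

theory Submission
  imports Defs
begin

(*
  Write r = (Ax - b)^+. Then 2 f(x) is the mean, over all beta-subsets tau, of (max_{i in tau} r_i)^2.
  That square lies between the average and the sum of the r_i^2 over tau, and every index lies in a
  fraction beta/m of the subsets, so 2 f(x) lies between |r|^2/m and (beta/m) |r|^2. Hoffman's bound
  turns the lower estimate into d(x,P)^2/(m L^2). For the upper ones, let p be the projection of x
  onto P: then 0 <= r_i <= |a_i^T (x - p)|, so |r|^2 <= |A(x - p)|^2 <= lambda_max(A^T A) d(x,P)^2,
  and r_i <= d(x,P) because the rows are unit vectors. Comparing both estimates at a point outside P
  gives mu1 <= mu2.
*)

lemma inner_matrix_vector_transpose:
  fixes M :: "real^'n^'m"
  shows "(M *v u) \<bullet> z = u \<bullet> (transpose M *v z)"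
  by (metis dot_lmul_matrix inner_commute vector_transpose_matrix)

lemma finite_eigenvalues_symmetric:
  fixes M :: "real^'n^'n"
  assumes sym: "transpose M = M"
  shows "finite {l. \<exists>v. v \<noteq> 0 \<and> M *v v = l *\<^sub>R v}"
proof -
  define E where "E = {l. \<exists>v. v \<noteq> 0 \<and> M *v v = l *\<^sub>R v}"
  define eigvec where "eigvec l = (SOME v. v \<noteq> 0 \<and> M *v v = l *\<^sub>R v)" for l
  have "eigvec l \<noteq> 0 \<and> M *v eigvec l = l *\<^sub>R eigvec l" if "l \<in> E" for l
    unfolding eigvec_def by (rule someI_ex) (use that in \<open>simp add: E_def\<close>)
  then have eigvec: "eigvec l \<noteq> 0" "M *v eigvec l = l *\<^sub>R eigvec l" if "l \<in> E" for l
    using that by simp_all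
  have inj: "inj_on eigvec E"
  proof (rule inj_onI)
    fix l k assume l: "l \<in> E" and k: "k \<in> E" and eq: "eigvec l = eigvec k"
    have "l *\<^sub>R eigvec l = M *v eigvec k"
      using eigvec(2)[OF l] eq by simp
    also have "\<dots> = k *\<^sub>R eigvec l"
      using eigvec(2)[OF k] eq by simp
    finally show "l = k"
      using eigvec(1)[OF l] by simp
  qed
  have orth: "orthogonal (eigvec l) (eigvec k)" if "l \<in> E" "k \<in> E" "l \<noteq> k" for l k
  proof -
    have "l * (eigvec l \<bullet> eigvec k) = (M *v eigvec l) \<bullet> eigvec k"
      using eigvec(2)[OF that(1)] by simp
    also have "\<dots> = eigvec l \<bullet> (M *v eigvec k)"
      by (metis inner_matrix_vector_transpose sym)
    also have "\<dots> = k * (eigvec l \<bullet> eigvec k)"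
      using eigvec(2)[OF that(2)] by simp
    finally show ?thesis
      using that(3) by (simp add: orthogonal_def)
  qed
  have "pairwise orthogonal (eigvec ` E)"
  proof (rule pairwiseI)
    fix u w assume "u \<in> eigvec ` E" "w \<in> eigvec ` E" "u \<noteq> w"
    then obtain l k where "l \<in> E" "k \<in> E" "l \<noteq> k" "u = eigvec l" "w = eigvec k"
      by blast
    then show "orthogonal u w"
      using orth by simp
  qed
  moreover have "0 \<notin> eigvec ` E"
    by (auto dest: eigvec(1))
  ultimately have "finite (eigvec ` E)"
    by (intro independent_imp_finite pairwise_orthogonal_independent)
  then show ?thesis
    using inj finite_imageD unfolding E_def by blast
qed

lemma eigenvalue_le_lambda_max:
  fixes M :: "real^'n^'n"
  assumes "transpose M = M" and "v \<noteq> 0" and "M *v v = l *\<^sub>R v"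
  shows "l \<le> lambda_max M"
  unfolding lambda_max_def using assms finite_eigenvalues_symmetric[OF assms(1)]
  by (intro Max_ge) auto

lemma quadratic_nonpos_imp_linear_coeff_zero:
  fixes a k :: real
  assumes "\<And>t. a * t + k * t\<^sup>2 \<le> 0"
  shows "a = 0"
proof -
  define c where "c = \<bar>k\<bar> + 1"
  have c: "c > 0" "c + k \<ge> 1"
    by (simp_all add: c_def)
  have "a\<^sup>2 * (c + k) = c\<^sup>2 * (a * (a / c) + k * (a / c)\<^sup>2)"
    using c by (simp add: field_simps power2_eq_square)
  also have "\<dots> \<le> 0"
    using assms[of "a / c"] by (simp add: mult_nonneg_nonpos)
  finally have "a\<^sup>2 * (c + k) \<le> 0" .
  then show ?thesis
    using c by (simp add: mult_le_0_iff)
qed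

lemma ex_unit_maximizer_norm_matrix_vector:
  fixes A :: "real^'n^'m"
  obtains v where "norm v = 1" "\<And>y. (norm (A *v y))\<^sup>2 \<le> (norm (A *v v))\<^sup>2 * (norm y)\<^sup>2"
proof -
  have "continuous_on (sphere 0 1) (\<lambda>y. (norm (A *v y))\<^sup>2)"
    by (intro continuous_intros linear_continuous_on matrix_vector_mul_linear)
  moreover have "sphere (0::real^'n) 1 \<noteq> {}"
    by simp
  ultimately obtain v where v: "v \<in> sphere 0 1"
    and max: "\<And>y. y \<in> sphere 0 1 \<Longrightarrow> (norm (A *v y))\<^sup>2 \<le> (norm (A *v v))\<^sup>2"
    using continuous_attains_sup[OF compact_sphere] by blast
  have "(norm (A *v y))\<^sup>2 \<le> (norm (A *v v))\<^sup>2 * (norm y)\<^sup>2" for y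
  proof (cases "y = 0")
    case False
    then have "(norm (A *v (y /\<^sub>R norm y)))\<^sup>2 \<le> (norm (A *v v))\<^sup>2"
      by (intro max) simp
    moreover have "norm (A *v (y /\<^sub>R norm y)) = norm (A *v y) / norm y"
      by (simp add: matrix_vector_mult_scaleR divide_inverse_commute)
    ultimately show ?thesis
      using False by (simp add: power_divide pos_divide_le_eq)
  qed simp
  with v show ?thesis using that by simp
qed

lemma rayleigh_maximizer_eigenvector:
  fixes A :: "real^'n^'m"
  assumes max: "\<And>y. (norm (A *v y))\<^sup>2 \<le> lam * (norm y)\<^sup>2"
    and attained: "(norm (A *v v))\<^sup>2 = lam * (norm v)\<^sup>2"
  shows "(transpose A ** A) *v v = lam *\<^sub>R v"
proof -
  define w where "w = (transpose A ** A) *v v - lam *\<^sub>R v"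
  have "(A *v v) \<bullet> (A *v w) = ((transpose A ** A) *v v) \<bullet> w"
    by (metis inner_commute inner_matrix_vector_transpose matrix_vector_mul_assoc)
  then have Aw: "(A *v v) \<bullet> (A *v w) = w \<bullet> w + lam * (v \<bullet> w)"
    by (simp add: w_def inner_diff_left)
  have expand: "(norm (u + t *\<^sub>R z))\<^sup>2 = (norm u)\<^sup>2 + 2 * t * (u \<bullet> z) + t\<^sup>2 * (norm z)\<^sup>2"
    for u z :: "'a::real_inner" and t
    unfolding power2_norm_eq_inner
    by (simp add: inner_add_left inner_add_right inner_commute power2_eq_square algebra_simps)
  \<comment> \<open>Moving from v towards w changes the excess of lam |y|^2 over |Ay|^2 at first order by -2 t |w|^2.\<close>
  have "(2 * (w \<bullet> w)) * t + ((norm (A *v w))\<^sup>2 - lam * (norm w)\<^sup>2) * t\<^sup>2 \<le> 0" for t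
  proof -
    have "(norm (A *v v))\<^sup>2 + 2 * t * ((A *v v) \<bullet> (A *v w)) + t\<^sup>2 * (norm (A *v w))\<^sup>2
        \<le> lam * ((norm v)\<^sup>2 + 2 * t * (v \<bullet> w) + t\<^sup>2 * (norm w)\<^sup>2)"
      using max[of "v + t *\<^sub>R w"]
      by (simp only: matrix_vector_right_distrib matrix_vector_mult_scaleR expand)
    then show ?thesis
      unfolding attained Aw by (simp add: algebra_simps)
  qed
  then have "w \<bullet> w = 0"
    using quadratic_nonpos_imp_linear_coeff_zero by fastforce
  then show ?thesis by (simp add: w_def)
qed

lemma norm_matrix_vector_sq_le_lambda_max:
  fixes A :: "real^'n^'m"
  shows "(norm (A *v y))\<^sup>2 \<le> lambda_max (transpose A ** A) * (norm y)\<^sup>2"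
proof -
  obtain v where v: "norm v = 1"
    and max: "\<And>y. (norm (A *v y))\<^sup>2 \<le> (norm (A *v v))\<^sup>2 * (norm y)\<^sup>2"
    using ex_unit_maximizer_norm_matrix_vector by blast
  define lam where "lam = (norm (A *v v))\<^sup>2"
  have "(transpose A ** A) *v v = lam *\<^sub>R v"
    using max v by (intro rayleigh_maximizer_eigenvector) (simp_all add: lam_def)
  then have "lam \<le> lambda_max (transpose A ** A)"
    using v by (intro eigenvalue_le_lambda_max) (auto simp: matrix_transpose_mul)
  have "(norm (A *v y))\<^sup>2 \<le> lam * (norm y)\<^sup>2"
    using max[of y] by (simp add: lam_def)
  also have "\<dots> \<le> lambda_max (transpose A ** A) * (norm y)\<^sup>2"
    using \<open>lam \<le> lambda_max (transpose A ** A)\<close> by (simp add: mult_right_mono)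
  finally show ?thesis .
qed

definition mean_max_sq :: "nat \<Rightarrow> real^'m \<Rightarrow> real" where
  "mean_max_sq \<beta> v =
     (\<Sum>\<tau>\<in>{\<tau>::'m set. card \<tau> = \<beta>}. (Max ((\<lambda>i. v $ i) ` \<tau>))\<^sup>2) / real (CARD('m) choose \<beta>)"

lemma sampled_f_eq_mean_max_sq:
  "sampled_f A b \<beta> x = mean_max_sq \<beta> (pos_part (A *v x - b)) / 2"
  by (simp add: sampled_f_def mean_max_sq_def pos_part_def sum_divide_distrib mult.commute)

lemma power2_norm_vec_eq_sum:
  fixes v :: "real^'m"
  shows "(norm v)\<^sup>2 = (\<Sum>i\<in>UNIV. (v $ i)\<^sup>2)"
  by (simp add: norm_vec_def L2_set_def sum_nonneg)

lemma card_subsets_containing: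
  fixes i :: "'m::finite"
  assumes "1 \<le> \<beta>"
  shows "card {\<tau>::'m set. card \<tau> = \<beta> \<and> i \<in> \<tau>} = (CARD('m) - 1) choose (\<beta> - 1)"
proof -
  have eq: "{\<tau>::'m set. card \<tau> = \<beta> \<and> i \<in> \<tau>} = insert i ` {\<sigma>. \<sigma> \<subseteq> -{i} \<and> card \<sigma> = \<beta> - 1}"
  proof (intro set_eqI iffI)
    fix \<tau> assume "\<tau> \<in> {\<tau>::'m set. card \<tau> = \<beta> \<and> i \<in> \<tau>}"
    then have "\<tau> = insert i (\<tau> - {i})" "\<tau> - {i} \<in> {\<sigma>. \<sigma> \<subseteq> -{i} \<and> card \<sigma> = \<beta> - 1}"
      by auto
    then show "\<tau> \<in> insert i ` {\<sigma>. \<sigma> \<subseteq> -{i} \<and> card \<sigma> = \<beta> - 1}"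
      by blast
  next
    fix \<tau> assume "\<tau> \<in> insert i ` {\<sigma>. \<sigma> \<subseteq> -{i} \<and> card \<sigma> = \<beta> - 1}"
    then obtain \<sigma> where "\<tau> = insert i \<sigma>" "i \<notin> \<sigma>" "card \<sigma> = \<beta> - 1"
      by blast
    then show "\<tau> \<in> {\<tau>::'m set. card \<tau> = \<beta> \<and> i \<in> \<tau>}"
      using assms by simp
  qed
  have inj: "inj_on (insert i) {\<sigma>. \<sigma> \<subseteq> -{i} \<and> card \<sigma> = \<beta> - 1}"
    by (rule inj_onI) (metis ComplD Diff_insert_absorb mem_Collect_eq singletonI subsetD)
  have "card (-{i}) = CARD('m) - 1"
    by (simp add: Compl_eq_Diff_UNIV card_Diff_singleton)
  then have "card {\<sigma>. \<sigma> \<subseteq> -{i} \<and> card \<sigma> = \<beta> - 1} = (CARD('m) - 1) choose (\<beta> - 1)"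
    by (metis finite n_subsets)
  then show ?thesis
    unfolding eq card_image[OF inj] .
qed

lemma sum_subsets_sum:
  fixes g :: "'m::finite \<Rightarrow> real"
  shows "real CARD('m) * (\<Sum>\<tau>\<in>{\<tau>::'m set. card \<tau> = \<beta>}. \<Sum>i\<in>\<tau>. g i)
       = real \<beta> * real (CARD('m) choose \<beta>) * (\<Sum>i\<in>UNIV. g i)"
proof (cases "\<beta> = 0")
  case False
  let ?T = "{\<tau>::'m set. card \<tau> = \<beta>}"
  have "(\<Sum>\<tau>\<in>?T. \<Sum>i\<in>\<tau>. g i) = (\<Sum>\<tau>\<in>?T. \<Sum>i\<in>UNIV. if i \<in> \<tau> then g i else 0)"
    by (rule sum.cong) (simp_all add: sum.If_cases Int_def)
  also have "\<dots> = (\<Sum>i\<in>UNIV. \<Sum>\<tau>\<in>?T. if i \<in> \<tau> then g i else 0)"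
    by (rule sum.swap)
  also have "\<dots> = (\<Sum>i\<in>UNIV. real (card {\<tau>::'m set. card \<tau> = \<beta> \<and> i \<in> \<tau>}) * g i)"
    by (intro sum.cong) (simp_all add: sum.If_cases Int_def conj_commute)
  also have "\<dots> = real ((CARD('m) - 1) choose (\<beta> - 1)) * (\<Sum>i\<in>UNIV. g i)"
    using False by (simp add: card_subsets_containing sum_distrib_left)
  finally show ?thesis
    using times_binomial_minus1_eq[of \<beta> "CARD('m)"] False
    by (simp flip: of_nat_mult)
qed simp

lemma Max_sq_le_sum_sq:
  fixes f :: "'a \<Rightarrow> real"
  assumes "finite \<tau>" "\<tau> \<noteq> {}" "\<And>i. 0 \<le> f i"
  shows "(Max (f ` \<tau>))\<^sup>2 \<le> (\<Sum>i\<in>\<tau>. (f i)\<^sup>2)"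
proof -
  have "Max (f ` \<tau>) \<in> f ` \<tau>"
    using assms(1,2) by (intro Max_in) auto
  then obtain j where "j \<in> \<tau>" "Max (f ` \<tau>) = f j"
    by blast
  then show ?thesis
    using assms(1) by (auto intro: member_le_sum)
qed

lemma sum_sq_le_card_Max_sq:
  fixes f :: "'a \<Rightarrow> real"
  assumes "finite \<tau>" "\<And>i. 0 \<le> f i"
  shows "(\<Sum>i\<in>\<tau>. (f i)\<^sup>2) \<le> real (card \<tau>) * (Max (f ` \<tau>))\<^sup>2"
  using assms by (intro sum_bounded_above power_mono Max_ge) auto

lemma mean_max_sq_ge:
  fixes v :: "real^'m"
  assumes nonneg: "\<And>i. 0 \<le> v $ i" and "1 \<le> \<beta>" "\<beta> \<le> CARD('m)"
  shows "(norm v)\<^sup>2 / CARD('m) \<le> mean_max_sq \<beta> v"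
proof -
  let ?T = "{\<tau>::'m set. card \<tau> = \<beta>}"
  let ?C = "real (CARD('m) choose \<beta>)"
  have "real \<beta> * ?C * (norm v)\<^sup>2 = CARD('m) * (\<Sum>\<tau>\<in>?T. \<Sum>i\<in>\<tau>. (v $ i)\<^sup>2)"
    by (simp add: sum_subsets_sum power2_norm_vec_eq_sum)
  also have "\<dots> \<le> CARD('m) * (\<Sum>\<tau>\<in>?T. real \<beta> * (Max ((\<lambda>i. v $ i) ` \<tau>))\<^sup>2)"
    using sum_sq_le_card_Max_sq[of _ "\<lambda>i. v $ i"] nonneg
    by (intro mult_left_mono sum_mono) auto
  finally have "real \<beta> * (?C * (norm v)\<^sup>2) \<le> real \<beta> * (CARD('m) * (\<Sum>\<tau>\<in>?T. (Max ((\<lambda>i. v $ i) ` \<tau>))\<^sup>2))"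
    by (simp add: sum_distrib_left algebra_simps)
  then have "?C * (norm v)\<^sup>2 \<le> CARD('m) * (\<Sum>\<tau>\<in>?T. (Max ((\<lambda>i. v $ i) ` \<tau>))\<^sup>2)"
    using \<open>1 \<le> \<beta>\<close> by simp
  then show ?thesis
    using \<open>\<beta> \<le> CARD('m)\<close>
    by (simp add: mean_max_sq_def field_simps)
qed

lemma mean_max_sq_le:
  fixes v :: "real^'m"
  assumes nonneg: "\<And>i. 0 \<le> v $ i" and "1 \<le> \<beta>" "\<beta> \<le> CARD('m)"
  shows "mean_max_sq \<beta> v \<le> \<beta> / CARD('m) * (norm v)\<^sup>2"
proof -
  let ?T = "{\<tau>::'m set. card \<tau> = \<beta>}"
  let ?C = "real (CARD('m) choose \<beta>)"
  have "(Max ((\<lambda>i. v $ i) ` \<tau>))\<^sup>2 \<le> (\<Sum>i\<in>\<tau>. (v $ i)\<^sup>2)" if "\<tau> \<in> ?T" for \<tau>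
    using that nonneg \<open>1 \<le> \<beta>\<close> by (intro Max_sq_le_sum_sq) auto
  then have "CARD('m) * (\<Sum>\<tau>\<in>?T. (Max ((\<lambda>i. v $ i) ` \<tau>))\<^sup>2)
      \<le> CARD('m) * (\<Sum>\<tau>\<in>?T. \<Sum>i\<in>\<tau>. (v $ i)\<^sup>2)"
    by (intro mult_left_mono sum_mono) auto
  also have "\<dots> = real \<beta> * ?C * (norm v)\<^sup>2"
    by (simp add: sum_subsets_sum power2_norm_vec_eq_sum)
  finally show ?thesis
    using \<open>\<beta> \<le> CARD('m)\<close>
    by (simp add: mean_max_sq_def field_simps)
qed

lemma mean_max_sq_le_bound:
  fixes v :: "real^'m"
  assumes nonneg: "\<And>i. 0 \<le> v $ i" and bound: "\<And>i. v $ i \<le> c" and "1 \<le> \<beta>" "\<beta> \<le> CARD('m)"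
  shows "mean_max_sq \<beta> v \<le> c\<^sup>2"
proof -
  let ?T = "{\<tau>::'m set. card \<tau> = \<beta>}"
  have "(Max ((\<lambda>i. v $ i) ` \<tau>))\<^sup>2 \<le> c\<^sup>2" if "\<tau> \<in> ?T" for \<tau>
  proof -
    have "\<tau> \<noteq> {}"
      using that \<open>1 \<le> \<beta>\<close> by auto
    then have "Max ((\<lambda>i. v $ i) ` \<tau>) \<le> c" "0 \<le> Max ((\<lambda>i. v $ i) ` \<tau>)"
      using nonneg bound by (auto simp: Max_ge_iff)
    then show ?thesis
      by (rule power_mono)
  qed
  then have "(\<Sum>\<tau>\<in>?T. (Max ((\<lambda>i. v $ i) ` \<tau>))\<^sup>2) \<le> real (CARD('m) choose \<beta>) * c\<^sup>2"
    using sum_bounded_above[of ?T _ "c\<^sup>2"] n_subsets[of "UNIV :: 'm set" \<beta>] by simp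
  then show ?thesis
    using \<open>\<beta> \<le> CARD('m)\<close>
    by (simp add: mean_max_sq_def field_simps)
qed

lemma closed_polyhedron: "closed (polyhedron A b)"
proof -
  have "polyhedron A b = (\<Inter>i. {x. A $ i \<bullet> x \<le> b $ i})"
    by (auto simp: polyhedron_def matrix_vector_mul_component)
  then show ?thesis
    by (simp add: closed_INT closed_halfspace_le)
qed

lemma pos_part_residual_le:
  assumes "p \<in> polyhedron A b"
  shows "pos_part (A *v x - b) $ i \<le> \<bar>(A *v (x - p)) $ i\<bar>"
proof -
  have "(A *v x) $ i - b $ i \<le> (A *v x) $ i - (A *v p) $ i"
    using assms by (simp add: polyhedron_def)
  then show ?thesis
    by (simp add: pos_part_def matrix_vector_mult_diff_distrib)
qed

lemma sampled_f_ge_infdist: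
  fixes A :: "real^'n^'m" and L :: real
  assumes "1 \<le> \<beta>" "\<beta> \<le> CARD('m)" and "L > 0"
    and hoffman: "(infdist x (polyhedron A b))\<^sup>2 \<le> L\<^sup>2 * (norm (pos_part (A *v x - b)))\<^sup>2"
  shows "1 / (CARD('m) * L\<^sup>2) / 2 * (infdist x (polyhedron A b))\<^sup>2 \<le> sampled_f A b \<beta> x"
proof -
  have "(infdist x (polyhedron A b))\<^sup>2 / (CARD('m) * L\<^sup>2) \<le> (norm (pos_part (A *v x - b)))\<^sup>2 / CARD('m)"
    using hoffman \<open>L > 0\<close> by (simp add: field_simps)
  also have "\<dots> \<le> mean_max_sq \<beta> (pos_part (A *v x - b))"
    using assms(1,2) by (intro mean_max_sq_ge) (simp_all add: pos_part_def)
  finally show ?thesis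
    by (simp add: sampled_f_eq_mean_max_sq)
qed

lemma sampled_f_le_infdist:
  fixes A :: "real^'n^'m"
  assumes rows: "\<And>i. norm (A $ i) = 1" and "polyhedron A b \<noteq> {}" and "1 \<le> \<beta>" "\<beta> \<le> CARD('m)"
  shows "sampled_f A b \<beta> x
    \<le> min 1 (\<beta> / CARD('m) * lambda_max (transpose A ** A)) / 2 * (infdist x (polyhedron A b))\<^sup>2"
proof -
  let ?r = "pos_part (A *v x - b)"
  let ?lam = "lambda_max (transpose A ** A)"
  obtain p where p: "p \<in> polyhedron A b" and d: "infdist x (polyhedron A b) = norm (x - p)"
    using infdist_attains_inf[OF closed_polyhedron assms(2)] by (auto simp: dist_norm)
  have r_nonneg: "0 \<le> ?r $ i" for i
    by (simp add: pos_part_def)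
  have "norm ?r \<le> norm (A *v (x - p))"
  proof (rule norm_le_componentwise_cart)
    show "norm (?r $ i) \<le> norm ((A *v (x - p)) $ i)" for i
      using pos_part_residual_le[OF p, of x i] r_nonneg[of i] by simp
  qed
  then have "(norm ?r)\<^sup>2 \<le> (norm (A *v (x - p)))\<^sup>2"
    by (simp add: power_mono)
  also have "\<dots> \<le> ?lam * (norm (x - p))\<^sup>2"
    by (rule norm_matrix_vector_sq_le_lambda_max)
  finally have "\<beta> / CARD('m) * (norm ?r)\<^sup>2 \<le> \<beta> / CARD('m) * (?lam * (norm (x - p))\<^sup>2)"
    by (rule mult_left_mono) simp
  then have upper_lam: "mean_max_sq \<beta> ?r \<le> \<beta> / CARD('m) * ?lam * (norm (x - p))\<^sup>2"
    using mean_max_sq_le[OF r_nonneg assms(3,4)] by simp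
  have "?r $ i \<le> norm (x - p)" for i
  proof -
    have "\<bar>(A *v (x - p)) $ i\<bar> \<le> norm (A $ i) * norm (x - p)"
      unfolding matrix_vector_mul_component by (rule Cauchy_Schwarz_ineq2)
    then show ?thesis
      using pos_part_residual_le[OF p, of x i] rows by simp
  qed
  then have upper_1: "mean_max_sq \<beta> ?r \<le> (norm (x - p))\<^sup>2"
    using mean_max_sq_le_bound[OF r_nonneg _ assms(3,4)] by blast
  have "mean_max_sq \<beta> ?r \<le> min 1 (\<beta> / CARD('m) * ?lam) * (norm (x - p))\<^sup>2"
    using upper_lam upper_1 by (simp add: min_mult_distrib_right)
  then show ?thesis
    by (simp add: sampled_f_eq_mean_max_sq d)
qed

lemma ex_infdist_polyhedron_pos:
  fixes A :: "real^'n^'m"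
  assumes "A $ i \<noteq> 0" and "polyhedron A b \<noteq> {}"
  obtains x where "0 < infdist x (polyhedron A b)"
proof
  define x where "x = ((\<bar>b $ i\<bar> + 1) / (norm (A $ i))\<^sup>2) *\<^sub>R A $ i"
  have "(A *v x) $ i = \<bar>b $ i\<bar> + 1"
    using assms(1) by (simp add: x_def matrix_vector_mul_component power2_norm_eq_inner)
  then have "x \<notin> polyhedron A b"
    by (auto simp: polyhedron_def intro!: exI[of _ i])
  then show "0 < infdist x (polyhedron A b)"
    using in_closed_iff_infdist_zero[OF closed_polyhedron assms(2)] infdist_nonneg
    by (metis order_le_less)
qed

theorem lemma6:
  fixes A :: "real^'n^'m" and b :: "real^'m" and \<beta> :: nat and L :: real
  assumes rows: "\<And>i. norm (A $ i) = 1"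
    and consistent: "polyhedron A b \<noteq> {}"
    and beta: "1 \<le> \<beta>" "\<beta> \<le> CARD('m)"
    and Lpos: "L > 0"
    and hoffman: "\<And>x. (infdist x (polyhedron A b))\<^sup>2 \<le> L\<^sup>2 * (norm (pos_part (A *v x - b)))\<^sup>2"
  shows "let \<mu>1 = 1 / (real CARD('m) * L\<^sup>2);
             \<mu>2 = min 1 (real \<beta> / real CARD('m) * lambda_max (transpose A ** A))
         in 0 < \<mu>1 \<and> \<mu>1 \<le> \<mu>2 \<and> \<mu>2 \<le> 1 \<and>
            (\<forall>x. \<mu>1 / 2 * (infdist x (polyhedron A b))\<^sup>2 \<le> sampled_f A b \<beta> x \<and>
                 sampled_f A b \<beta> x \<le> \<mu>2 / 2 * (infdist x (polyhedron A b))\<^sup>2)"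
proof -
  define \<mu>1 where "\<mu>1 = 1 / (real CARD('m) * L\<^sup>2)"
  define \<mu>2 where "\<mu>2 = min 1 (real \<beta> / real CARD('m) * lambda_max (transpose A ** A))"
  have bounds: "\<mu>1 / 2 * (infdist x (polyhedron A b))\<^sup>2 \<le> sampled_f A b \<beta> x \<and>
      sampled_f A b \<beta> x \<le> \<mu>2 / 2 * (infdist x (polyhedron A b))\<^sup>2" for x
    unfolding \<mu>1_def \<mu>2_def
    using sampled_f_ge_infdist[OF beta Lpos hoffman] sampled_f_le_infdist[OF rows consistent beta]
    by blast
  have "A $ i \<noteq> 0" for i
    using rows[of i] by auto
  then obtain x0 where x0: "0 < infdist x0 (polyhedron A b)"
    using ex_infdist_polyhedron_pos[OF _ consistent] by blast
  have "\<mu>1 / 2 * (infdist x0 (polyhedron A b))\<^sup>2 \<le> \<mu>2 / 2 * (infdist x0 (polyhedron A b))\<^sup>2"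
    using bounds[of x0] by linarith
  then have "\<mu>1 \<le> \<mu>2"
    using x0 by simp
  moreover have "0 < \<mu>1" "\<mu>2 \<le> 1"
    using Lpos by (simp_all add: \<mu>1_def \<mu>2_def)
  ultimately show ?thesis
    using bounds unfolding Let_def \<mu>1_def \<mu>2_def by blast
qed

end
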